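(* Let $X$ be a topological space and $(Y,d)$ a metric space. Then the family $$\mathcal{B}=\{B_K(f,\epsilon): f\in C_{od}^\star(X,Y),\ K \text{ a nonempty compact subset of } \mathrm{dom}(f),\ \epsilon>0\}\cup\{C_{od}(X,Y)\}$$ is a basis for a topology on $C_{od}(X,Y)$.
   Context: $C_{od}(X,Y)$ is the set of continuous functions $f:\mathrm{dom}(f)\to Y$ whose domain $\mathrm{dom}(f)$ is an open subset of $X$ (including the empty function $\emptyset$), and $C_{od}^\star(X,Y)=C_{od}(X,Y)\setminus\{\emptyset\}$. For $f,g$ and a nonempty compact $K\subseteq\mathrm{dom}(f)\cap\mathrm{dom}(g)$, $d_K(f,g)=\sup_{x\in K}d(f(x),g(x))$. For $f\in C_{od}^\star(X,Y)$, $K$ a nonempty compact subset of $\mathrm{dom}(f)$ and $\epsilon>0$, $B_K(f,\epsilon)=\{g\in C_{od}^\star(X,Y): K\subseteq\mathrm{dom}(g)\text{ and } d_K(f,g)<\epsilon\}$. *)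

theory Defs
  imports "HOL-Analysis.Analysis"
begin

text \<open>Partial functions f : dom(f) -> Y are represented as partial maps 'a \<rightharpoonup> 'b;
  dom f is Map.dom f, the value at x in dom f is the (f x). The empty function is Map.empty.\<close>

definition Cod :: "'a topology \<Rightarrow> ('a \<rightharpoonup> 'b::metric_space) set" where
  "Cod X = {f. openin X (dom f) \<and>
              continuous_map (subtopology X (dom f)) euclidean (\<lambda>x. the (f x))}"

definition Cod_star :: "'a topology \<Rightarrow> ('a \<rightharpoonup> 'b::metric_space) set" where
  "Cod_star X = Cod X - {Map.empty}"

definition dK :: "'a set \<Rightarrow> ('a \<rightharpoonup> 'b::metric_space) \<Rightarrow> ('a \<rightharpoonup> 'b) \<Rightarrow> real" where
  "dK K f g = (SUP x\<in>K. dist (the (f x)) (the (g x)))"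

definition BK :: "'a topology \<Rightarrow> 'a set \<Rightarrow> ('a \<rightharpoonup> 'b::metric_space) \<Rightarrow> real \<Rightarrow> ('a \<rightharpoonup> 'b) set" where
  "BK X K f \<epsilon> = {g \<in> Cod_star X. K \<subseteq> dom g \<and> dK K f g < \<epsilon>}"

definition basis_for_topology_on :: "'c set \<Rightarrow> 'c set set \<Rightarrow> bool" where
  "basis_for_topology_on S \<B> \<longleftrightarrow>
     (\<exists>T::'c topology. topspace T = S \<and> (\<forall>U. openin T U \<longleftrightarrow> (\<exists>\<U>\<subseteq>\<B>. \<Union>\<U> = U)))"

end

theory Submission
  imports Defs
begin

text \<open>The sup-distance \<open>d\<^sub>K(f,g)\<close> is finite because \<open>f\<close> and \<open>g\<close> map the compact set \<open>K\<close>
  onto bounded sets, and it satisfies the triangle inequality; hence \<open>B\<^sub>K(f,\<epsilon>)\<close> contains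
  \<open>B\<^sub>K(g, \<epsilon> - d\<^sub>K(f,g))\<close> for each of its members \<open>g\<close>. Enlarging \<open>K\<close> shrinks a ball, so a \<open>g\<close>
  lying in \<open>B\<^sub>K\<^sub>1(f\<^sub>1,\<epsilon>\<^sub>1)\<close> and \<open>B\<^sub>K\<^sub>2(f\<^sub>2,\<epsilon>\<^sub>2)\<close> has a ball \<open>B\<^sub>K\<^sub>1\<^sub>\<union>\<^sub>K\<^sub>2(g,\<delta>)\<close> inside both,
  \<open>\<delta>\<close> being the smaller of the margins \<open>\<epsilon>\<^sub>i - d\<^sub>K\<^sub>i(f\<^sub>i,g)\<close>. Adding the whole space gives a
  covering family with the intersection property of a basis.\<close>

lemma basis_for_topology_onI:
  assumes "\<Union>\<B> = S"
    and "\<And>B1 B2 x. B1 \<in> \<B> \<Longrightarrow> B2 \<in> \<B> \<Longrightarrow> x \<in> B1 \<inter> B2 \<Longrightarrow> \<exists>B\<in>\<B>. x \<in> B \<and> B \<subseteq> B1 \<inter> B2"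
  shows "basis_for_topology_on S \<B>"
proof -
  let ?open = "arbitrary union_of (\<lambda>U. U \<in> \<B>)"
  have "istopology ?open"
    unfolding istopology_base_eq arbitrary_union_of_alt using assms(2) by (metis (no_types, lifting))
  then have open_eq: "openin (topology ?open) = ?open"
    by simp
  have open_iff: "?open U \<longleftrightarrow> (\<exists>\<U>\<subseteq>\<B>. \<Union>\<U> = U)" for U
    by (auto simp: union_of_def arbitrary_def)
  have "topspace (topology ?open) = S"
  proof
    show "topspace (topology ?open) \<subseteq> S"
      using openin_topspace[of "topology ?open"] assms(1) unfolding open_eq open_iff by blast
    show "S \<subseteq> topspace (topology ?open)"
      using openin_subset[of "topology ?open" S] assms(1) unfolding open_eq open_iff by blast
  qed
  then show ?thesis
    unfolding basis_for_topology_on_def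
    by (intro exI[of _ "topology ?open"]) (simp add: open_eq open_iff)
qed

lemma basis_for_topology_on_Un_space:
  assumes "\<And>B. B \<in> \<B> \<Longrightarrow> B \<subseteq> S"
    and "\<And>B1 B2 x. B1 \<in> \<B> \<Longrightarrow> B2 \<in> \<B> \<Longrightarrow> x \<in> B1 \<inter> B2 \<Longrightarrow> \<exists>B\<in>\<B>. x \<in> B \<and> B \<subseteq> B1 \<inter> B2"
  shows "basis_for_topology_on S (\<B> \<union> {S})"
proof (rule basis_for_topology_onI)
  show "\<Union>(\<B> \<union> {S}) = S"
    using assms(1) by blast
next
  fix B1 B2 x
  assume B: "B1 \<in> \<B> \<union> {S}" "B2 \<in> \<B> \<union> {S}" and x: "x \<in> B1 \<inter> B2"
  then consider "B1 \<in> \<B>" "B2 \<in> \<B>" | "B1 = S" | "B2 = S"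
    by auto
  then show "\<exists>B\<in>\<B> \<union> {S}. x \<in> B \<and> B \<subseteq> B1 \<inter> B2"
  proof cases
    case 1
    with assms(2) x obtain B where "B \<in> \<B>" "x \<in> B" "B \<subseteq> B1 \<inter> B2"
      by blast
    then show ?thesis
      by blast
  next
    case 2
    with assms(1) B(2) have "B2 \<subseteq> B1 \<inter> B2"
      by blast
    with B(2) x show ?thesis
      by blast
  next
    case 3
    with assms(1) B(1) have "B1 \<subseteq> B1 \<inter> B2"
      by blast
    with B(1) x show ?thesis
      by blast
  qed
qed

lemma compact_image_Cod:
  assumes "f \<in> Cod X" "compactin X K" "K \<subseteq> dom f"
  shows "compact ((\<lambda>x. the (f x)) ` K)"
proof -
  have "continuous_map (subtopology X (dom f)) euclidean (\<lambda>x. the (f x))"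
    using assms(1) by (simp add: Cod_def)
  moreover have "compactin (subtopology X (dom f)) K"
    using assms(2,3) by (simp add: compactin_subtopology)
  ultimately show ?thesis
    using image_compactin by fastforce
qed

lemma bdd_above_dist_Cod:
  assumes "f \<in> Cod X" "g \<in> Cod X" "compactin X K" "K \<subseteq> dom f" "K \<subseteq> dom g"
  shows "bdd_above ((\<lambda>x. dist (the (f x)) (the (g x))) ` K)"
proof -
  have "bounded ((\<lambda>x. the (f x)) ` K \<union> (\<lambda>x. the (g x)) ` K)"
    using compact_image_Cod[OF assms(1,3,4)] compact_image_Cod[OF assms(2,3,5)]
    by (simp add: compact_imp_bounded)
  then obtain e where "\<forall>y\<in>(\<lambda>x. the (f x)) ` K \<union> (\<lambda>x. the (g x)) ` K.
      \<forall>z\<in>(\<lambda>x. the (f x)) ` K \<union> (\<lambda>x. the (g x)) ` K. dist y z \<le> e"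
    unfolding bounded_two_points by blast
  then show ?thesis
    by (intro bdd_aboveI2[of _ _ e]) blast
qed

lemma dK_self:
  assumes "K \<noteq> {}"
  shows "dK K f f = 0"
  using assms by (simp add: dK_def)

lemma dK_triangle:
  assumes "f \<in> Cod X" "g \<in> Cod X" "h \<in> Cod X" "compactin X K" "K \<noteq> {}"
    and "K \<subseteq> dom f" "K \<subseteq> dom g" "K \<subseteq> dom h"
  shows "dK K f h \<le> dK K f g + dK K g h"
  unfolding dK_def
proof (rule cSUP_least[OF assms(5)])
  fix x assume "x \<in> K"
  have "dist (the (f x)) (the (h x)) \<le> dist (the (f x)) (the (g x)) + dist (the (g x)) (the (h x))"
    by (rule dist_triangle)
  also have "\<dots> \<le> (SUP x\<in>K. dist (the (f x)) (the (g x))) + (SUP x\<in>K. dist (the (g x)) (the (h x)))"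
    using cSUP_upper[OF \<open>x \<in> K\<close> bdd_above_dist_Cod[OF assms(1,2,4,6,7)]]
      cSUP_upper[OF \<open>x \<in> K\<close> bdd_above_dist_Cod[OF assms(2,3,4,7,8)]]
    by linarith
  finally show "dist (the (f x)) (the (h x))
      \<le> (SUP x\<in>K. dist (the (f x)) (the (g x))) + (SUP x\<in>K. dist (the (g x)) (the (h x)))" .
qed

lemma dK_mono:
  assumes "f \<in> Cod X" "g \<in> Cod X" "compactin X K" "K \<subseteq> dom f" "K \<subseteq> dom g"
    and "K' \<noteq> {}" "K' \<subseteq> K"
  shows "dK K' f g \<le> dK K f g"
  unfolding dK_def
  using cSUP_subset_mono[OF assms(6) bdd_above_dist_Cod[OF assms(1-5)] assms(7)] by simp

lemma BK_self:
  assumes "g \<in> Cod_star X" "K \<noteq> {}" "K \<subseteq> dom g" "\<epsilon> > 0"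
  shows "g \<in> BK X K g \<epsilon>"
  using assms by (simp add: BK_def dK_self)

lemma BK_mono:
  assumes "\<epsilon> \<le> \<epsilon>'"
  shows "BK X K g \<epsilon> \<subseteq> BK X K g \<epsilon>'"
  using assms by (auto simp: BK_def)

lemma BK_antimono:
  assumes "g \<in> Cod X" "compactin X K" "K \<subseteq> dom g" "K' \<noteq> {}" "K' \<subseteq> K"
  shows "BK X K g \<epsilon> \<subseteq> BK X K' g \<epsilon>"
proof
  fix h assume h: "h \<in> BK X K g \<epsilon>"
  then have "h \<in> Cod X" "K \<subseteq> dom h"
    by (auto simp: BK_def Cod_star_def)
  then have "dK K' g h \<le> dK K g h"
    using dK_mono assms by blast
  with h assms(5) show "h \<in> BK X K' g \<epsilon>"
    by (auto simp: BK_def)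
qed

lemma BK_around_member:
  assumes "f \<in> Cod X" "compactin X K" "K \<noteq> {}" "K \<subseteq> dom f" "g \<in> BK X K f \<epsilon>"
  shows "BK X K g (\<epsilon> - dK K f g) \<subseteq> BK X K f \<epsilon>"
proof
  fix h assume h: "h \<in> BK X K g (\<epsilon> - dK K f g)"
  have "g \<in> Cod X" "K \<subseteq> dom g" "h \<in> Cod X" "K \<subseteq> dom h"
    using assms(5) h by (auto simp: BK_def Cod_star_def)
  then have "dK K f h \<le> dK K f g + dK K g h"
    using dK_triangle assms(1-4) by blast
  with h show "h \<in> BK X K f \<epsilon>"
    by (auto simp: BK_def)
qed

lemma BK_subset_of_member:
  assumes "f \<in> Cod X" "compactin X K'" "K' \<noteq> {}" "K' \<subseteq> dom f" "g \<in> BK X K' f \<epsilon>"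
    and "compactin X K" "K' \<subseteq> K" "K \<subseteq> dom g" "\<delta> \<le> \<epsilon> - dK K' f g"
  shows "BK X K g \<delta> \<subseteq> BK X K' f \<epsilon>"
proof -
  have "g \<in> Cod X"
    using assms(5) by (simp add: BK_def Cod_star_def)
  then have "BK X K g \<delta> \<subseteq> BK X K' g \<delta>"
    using assms(6,8,3,7) by (rule BK_antimono)
  also have "\<dots> \<subseteq> BK X K' g (\<epsilon> - dK K' f g)"
    using assms(9) by (rule BK_mono)
  also have "\<dots> \<subseteq> BK X K' f \<epsilon>"
    using assms(1-5) by (rule BK_around_member)
  finally show ?thesis .
qed

definition compact_balls :: "'a topology \<Rightarrow> ('a \<rightharpoonup> 'b::metric_space) set set" where
  "compact_balls X = {BK X K f \<epsilon> | f K \<epsilon>.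
     f \<in> Cod_star X \<and> K \<noteq> {} \<and> compactin X K \<and> K \<subseteq> dom f \<and> \<epsilon> > 0}"

lemma compact_balls_subset_Cod: "B \<in> compact_balls X \<Longrightarrow> B \<subseteq> Cod X"
  by (auto simp: compact_balls_def BK_def Cod_star_def)

lemma compact_balls_Int:
  assumes "B1 \<in> compact_balls X" "B2 \<in> compact_balls X" "g \<in> B1 \<inter> B2"
  shows "\<exists>B\<in>compact_balls X. g \<in> B \<and> B \<subseteq> B1 \<inter> B2"
proof -
  obtain f1 K1 \<epsilon>1 where B1: "B1 = BK X K1 f1 \<epsilon>1" "f1 \<in> Cod X" "K1 \<noteq> {}"
      "compactin X K1" "K1 \<subseteq> dom f1"
    using assms(1) by (auto simp: compact_balls_def Cod_star_def)
  obtain f2 K2 \<epsilon>2 where B2: "B2 = BK X K2 f2 \<epsilon>2" "f2 \<in> Cod X" "K2 \<noteq> {}"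
      "compactin X K2" "K2 \<subseteq> dom f2"
    using assms(2) by (auto simp: compact_balls_def Cod_star_def)
  have g: "g \<in> BK X K1 f1 \<epsilon>1" "g \<in> BK X K2 f2 \<epsilon>2"
    using assms(3) B1(1) B2(1) by auto
  then have g_props: "g \<in> Cod_star X" "K1 \<subseteq> dom g" "K2 \<subseteq> dom g"
      "dK K1 f1 g < \<epsilon>1" "dK K2 f2 g < \<epsilon>2"
    by (auto simp: BK_def)
  define K where "K = K1 \<union> K2"
  define \<delta> where "\<delta> = min (\<epsilon>1 - dK K1 f1 g) (\<epsilon>2 - dK K2 f2 g)"
  have K: "K \<noteq> {}" "compactin X K" "K \<subseteq> dom g"
    using B1 B2 g_props by (auto simp: K_def compactin_Un)
  have "\<delta> > 0"
    using g_props by (simp add: \<delta>_def)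
  have "BK X K g \<delta> \<in> compact_balls X"
    using K g_props(1) \<open>\<delta> > 0\<close> by (auto simp: compact_balls_def)
  moreover have "g \<in> BK X K g \<delta>"
    using BK_self K g_props(1) \<open>\<delta> > 0\<close> by blast
  moreover have "BK X K g \<delta> \<subseteq> B1"
    unfolding B1(1)
    by (rule BK_subset_of_member[OF B1(2,4,3,5) g(1) K(2) _ K(3)]) (simp_all add: K_def \<delta>_def)
  moreover have "BK X K g \<delta> \<subseteq> B2"
    unfolding B2(1)
    by (rule BK_subset_of_member[OF B2(2,4,3,5) g(2) K(2) _ K(3)]) (simp_all add: K_def \<delta>_def)
  ultimately show ?thesis
    by blast
qed

theorem mainTheorem4:
  fixes X :: "'a topology"
  shows "basis_for_topology_on (Cod X :: ('a \<rightharpoonup> 'b::metric_space) set)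
           ({BK X K f \<epsilon> | f K \<epsilon>. f \<in> Cod_star X \<and> K \<noteq> {} \<and> compactin X K
                                 \<and> K \<subseteq> dom f \<and> \<epsilon> > 0} \<union> {Cod X})"
proof -
  have "basis_for_topology_on (Cod X) (compact_balls X \<union> {Cod X :: ('a \<rightharpoonup> 'b) set})"
    using compact_balls_subset_Cod compact_balls_Int by (rule basis_for_topology_on_Un_space)
  then show ?thesis
    unfolding compact_balls_def .
qed

end
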